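(* Let $f_1,h_1$ be arbitrary smooth functions of one variable and $f_0,h_0$ arbitrary constants. For the equation $m_t+f(u,u_x)m+(g(u,u_x)m)_x=0$, $m=u-u_{xx}$, with $$f(u,u_x)=u_xf_1(u^2-u_x^2)+\frac{f_0u}{u^2-u_x^2},\qquad g(u,u_x)=uf_1(u^2-u_x^2)+h_1(u^2-u_x^2)+\frac{f_0u^2+h_0u}{u_x(u^2-u_x^2)},$$ both a local conservation law for momentum, $D_t u+D_x\Phi_1=0$, and a local conservation law for the $H^1$ density, $D_t(u_x^2+u^2)+D_x\Phi_2=0$, hold on all locally smooth solutions (for suitable fluxes $\Phi_1,\Phi_2$ depending on $x,u,u_x,m,u_t,u_{tx}$).
   Context: $D_t$, $D_x$ denote total derivatives; a local conservation law holds on solutions, i.e. after eliminating $m_t$ via $m_t=-f(u,u_x)m-(g(u,u_x)m)_x$. The expressions are considered on open sets where they are defined. *)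

theory Defs
  imports "HOL-Analysis.Analysis"
begin

definition pt :: "(real \<Rightarrow> real \<Rightarrow> real) \<Rightarrow> real \<Rightarrow> real \<Rightarrow> real" where
  "pt F t x = deriv (\<lambda>s. F s x) t"

definition px :: "(real \<Rightarrow> real \<Rightarrow> real) \<Rightarrow> real \<Rightarrow> real \<Rightarrow> real" where
  "px F t x = deriv (\<lambda>y. F t y) x"

fun dapp :: "bool list \<Rightarrow> (real \<Rightarrow> real \<Rightarrow> real) \<Rightarrow> real \<Rightarrow> real \<Rightarrow> real" where
  "dapp [] F = F"
| "dapp (b # bs) F = (if b then pt else px) (dapp bs F)"

definition smooth2_on :: "(real \<times> real) set \<Rightarrow> (real \<Rightarrow> real \<Rightarrow> real) \<Rightarrow> bool" where
  "smooth2_on U F \<longleftrightarrow> (\<forall>ds. (\<lambda>z. dapp ds F (fst z) (snd z)) differentiable_on U)"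

definition smooth1 :: "(real \<Rightarrow> real) \<Rightarrow> bool" where
  "smooth1 f \<longleftrightarrow> (\<forall>n. (deriv ^^ n) f differentiable_on UNIV)"

end

theory Submission
  imports Defs
begin

text \<open>Put \<open>W = u\<^sup>2 - u\<^sub>x\<^sup>2\<close>, let \<open>F1, H1\<close> be
  antiderivatives of \<open>f1, h1\<close>, and \<open>L = ln ((u + u\<^sub>x)\<^sup>2) - ln ((u - u\<^sub>x)\<^sup>2)\<close>. Since
  \<open>D\<^sub>x W = 2 u\<^sub>x m\<close> and \<open>D\<^sub>x L = 4 (u u\<^sub>x\<^sub>x - u\<^sub>x\<^sup>2) / W\<close>, the fluxes
  \<open>\<Phi>\<^sub>1 = g m - u\<^sub>t\<^sub>x + F1 W / 2 + f0 x - f0 L / 4\<close> and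
  \<open>\<Phi>\<^sub>2 = 2 u (g m - u\<^sub>t\<^sub>x) - H1 W - 2 h0 x + h0 L / 2\<close>
  have x-derivatives \<open>-u\<^sub>t\<close> and \<open>-(u\<^sub>x\<^sup>2 + u\<^sup>2)\<^sub>t\<close> once \<open>(g m)\<^sub>x\<close> is eliminated by the
  equation with \<open>m\<^sub>t = u\<^sub>t - u\<^sub>t\<^sub>x\<^sub>x\<close>; the energy law uses the specific form of \<open>g\<close> through
  \<open>2 u\<^sub>x g - 2 u f = 2 u\<^sub>x h1 W + 2 h0 u / W\<close>, the momentum law holds for any \<open>g\<close>.
  The analytic input is the symmetry of mixed partial derivatives of a smooth \<open>u\<close> (Schwarz),
  obtained from the second difference \<open>u(t+h,x+h) - u(t+h,x) - u(t,x+h) + u(t,x)\<close>, whose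
  quotient by \<open>h\<^sup>2\<close> tends to both \<open>\<partial>\<^sub>x\<partial>\<^sub>t u\<close> and \<open>\<partial>\<^sub>t\<partial>\<^sub>x u\<close>.\<close>

lemma has_derivative_partials:
  assumes "((\<lambda>z. G (fst z) (snd z)) has_derivative D) (at (a, b))"
  shows "((\<lambda>s. G s b) has_real_derivative D (1, 0)) (at a)"
    and "((\<lambda>y. G a y) has_real_derivative D (0, 1)) (at b)"
proof -
  have lin: "linear D"
    using assms has_derivative_linear by blast
  have "((\<lambda>s. (s, b)) has_derivative (\<lambda>h. (h, 0))) (at a)"
    by (auto intro!: derivative_eq_intros)
  from has_derivative_compose[OF this assms]
  have "((\<lambda>s. G s b) has_derivative (\<lambda>h. D (h, 0))) (at a)"
    by simp
  moreover have "(\<lambda>h. D (h, 0)) = (*) (D (1, 0))"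
  proof
    fix h :: real
    show "D (h, 0) = D (1, 0) * h"
      using linear_scale[OF lin, of h "(1, 0)"] by (simp add: ac_simps)
  qed
  ultimately show "((\<lambda>s. G s b) has_real_derivative D (1, 0)) (at a)"
    by (simp add: has_field_derivative_def)
  have "((\<lambda>y. (a, y)) has_derivative (\<lambda>h. (0, h))) (at b)"
    by (auto intro!: derivative_eq_intros)
  from has_derivative_compose[OF this assms]
  have "((\<lambda>y. G a y) has_derivative (\<lambda>h. D (0, h))) (at b)"
    by simp
  moreover have "(\<lambda>h. D (0, h)) = (*) (D (0, 1))"
  proof
    fix h :: real
    show "D (0, h) = D (0, 1) * h"
      using linear_scale[OF lin, of h "(0, 1)"] by (simp add: ac_simps)
  qed
  ultimately show "((\<lambda>y. G a y) has_real_derivative D (0, 1)) (at b)"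
    by (simp add: has_field_derivative_def)
qed

lemma differentiable_partial_derivatives:
  assumes "(\<lambda>z. G (fst z) (snd z)) differentiable (at (a, b))"
  shows "((\<lambda>s. G s b) has_real_derivative pt G a b) (at a)"
    and "((\<lambda>y. G a y) has_real_derivative px G a b) (at b)"
proof -
  obtain D where D: "((\<lambda>z. G (fst z) (snd z)) has_derivative D) (at (a, b))"
    using assms differentiable_def by blast
  show "((\<lambda>s. G s b) has_real_derivative pt G a b) (at a)"
    using has_derivative_partials(1)[OF D] by (simp add: pt_def DERIV_imp_deriv)
  show "((\<lambda>y. G a y) has_real_derivative px G a b) (at b)"
    using has_derivative_partials(2)[OF D] by (simp add: px_def DERIV_imp_deriv)
qed

lemma MVT_symmetric:
  fixes \<phi> \<phi>' :: "real \<Rightarrow> real"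
  assumes "h \<noteq> 0" and "\<And>s. \<bar>s - t\<bar> \<le> \<bar>h\<bar> \<Longrightarrow> (\<phi> has_real_derivative \<phi>' s) (at s)"
  shows "\<exists>\<xi>. \<bar>\<xi> - t\<bar> \<le> \<bar>h\<bar> \<and> \<phi> (t + h) - \<phi> t = h * \<phi>' \<xi>"
proof (cases "h > 0")
  case True
  then obtain \<xi> where "t < \<xi>" "\<xi> < t + h" "\<phi> (t + h) - \<phi> t = (t + h - t) * \<phi>' \<xi>"
    using MVT2[of t "t + h" \<phi> \<phi>'] assms by force
  then show ?thesis by (intro exI[of _ \<xi>]) auto
next
  case False
  with assms(1) obtain \<xi> where "t + h < \<xi>" "\<xi> < t" "\<phi> t - \<phi> (t + h) = (t - (t + h)) * \<phi>' \<xi>"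
    using MVT2[of "t + h" t \<phi> \<phi>'] assms by force
  then show ?thesis by (intro exI[of _ \<xi>]) (auto simp: algebra_simps)
qed

definition mixed_difference :: "(real \<Rightarrow> real \<Rightarrow> real) \<Rightarrow> real \<Rightarrow> real \<Rightarrow> real \<Rightarrow> real" where
  "mixed_difference F t x h = F (t + h) (x + h) - F (t + h) x - F t (x + h) + F t x"

lemma mixed_difference_swap: "mixed_difference (\<lambda>y s. F s y) x t h = mixed_difference F t x h"
  by (simp add: mixed_difference_def)

lemma mixed_difference_mean_value:
  assumes "h \<noteq> 0"
    and "\<And>s y. \<bar>s - t\<bar> \<le> \<bar>h\<bar> \<Longrightarrow> y \<in> {x, x + h} \<Longrightarrow> ((\<lambda>s. F s y) has_real_derivative Ft s y) (at s)"
  obtains \<xi> where "\<bar>\<xi> - t\<bar> \<le> \<bar>h\<bar>" "mixed_difference F t x h = h * (Ft \<xi> (x + h) - Ft \<xi> x)"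
proof -
  have "\<exists>\<xi>. \<bar>\<xi> - t\<bar> \<le> \<bar>h\<bar> \<and>
      (F (t + h) (x + h) - F (t + h) x) - (F t (x + h) - F t x) = h * (Ft \<xi> (x + h) - Ft \<xi> x)"
    using assms by (intro MVT_symmetric DERIV_diff) auto
  then show thesis
    using that unfolding mixed_difference_def by (auto simp: algebra_simps)
qed

lemma mixed_difference_quotient_tendsto:
  fixes F Ft :: "real \<Rightarrow> real \<Rightarrow> real"
  assumes "r > 0"
    and Ft: "\<And>s y. \<bar>s - t\<bar> < r \<Longrightarrow> \<bar>y - x\<bar> < r \<Longrightarrow> ((\<lambda>s. F s y) has_real_derivative Ft s y) (at s)"
    and D: "((\<lambda>z. Ft (fst z) (snd z)) has_derivative D) (at (t, x))"
  shows "((\<lambda>h. mixed_difference F t x h / h\<^sup>2) \<longlongrightarrow> D (0, 1)) (at 0)"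
proof (rule LIM_I)
  fix e :: real
  assume "e > 0"
  have lin: "linear D"
    using D has_derivative_linear by blast
  define R where "R z = Ft (fst z) (snd z) - Ft t x - D (z - (t, x))" for z
  have "\<forall>\<epsilon>>0. \<exists>d>0. \<forall>z. norm (z - (t, x)) < d \<longrightarrow> \<bar>R z\<bar> \<le> \<epsilon> * norm (z - (t, x))"
    using D unfolding has_derivative_at_alt R_def real_norm_def by simp
  moreover have "e / 8 > 0"
    using \<open>e > 0\<close> by simp
  ultimately obtain d where "d > 0"
    and R: "\<And>z. norm (z - (t, x)) < d \<Longrightarrow> \<bar>R z\<bar> \<le> e / 8 * norm (z - (t, x))"
    by blast
  show "\<exists>s>0. \<forall>h. h \<noteq> 0 \<and> norm (h - 0) < s \<longrightarrow> norm (mixed_difference F t x h / h\<^sup>2 - D (0, 1)) < e"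
  proof (intro exI[of _ "min r (d / 2)"] conjI allI impI)
    show "min r (d / 2) > 0"
      using \<open>r > 0\<close> \<open>d > 0\<close> by simp
    fix h :: real
    assume "h \<noteq> 0 \<and> norm (h - 0) < min r (d / 2)"
    then have "h \<noteq> 0" "\<bar>h\<bar> < r" "\<bar>h\<bar> < d / 2"
      by auto
    have "((\<lambda>s. F s y) has_real_derivative Ft s y) (at s)"
      if "\<bar>s - t\<bar> \<le> \<bar>h\<bar>" "y \<in> {x, x + h}" for s y
      using that \<open>\<bar>h\<bar> < r\<close> by (intro Ft) auto
    then obtain \<xi> where \<xi>: "\<bar>\<xi> - t\<bar> \<le> \<bar>h\<bar>"
      and mvt: "mixed_difference F t x h = h * (Ft \<xi> (x + h) - Ft \<xi> x)"
      by (rule mixed_difference_mean_value[OF \<open>h \<noteq> 0\<close>])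
    have "D ((\<xi>, x + h) - (t, x)) - D ((\<xi>, x) - (t, x)) = D (h *\<^sub>R (0, 1))"
      using linear_diff[OF lin, of "(\<xi>, x + h) - (t, x)" "(\<xi>, x) - (t, x)"] by simp
    then have split: "Ft \<xi> (x + h) - Ft \<xi> x = h * D (0, 1) + (R (\<xi>, x + h) - R (\<xi>, x))"
      using linear_scale[OF lin, of h "(0, 1)"] by (simp add: R_def)
    have small: "\<bar>R (\<xi>, y)\<bar> \<le> e / 4 * \<bar>h\<bar>" if "\<bar>y - x\<bar> \<le> \<bar>h\<bar>" for y
    proof -
      have near: "norm ((\<xi>, y) - (t, x)) \<le> 2 * \<bar>h\<bar>"
        using norm_Pair_le[of "\<xi> - t" "y - x"] \<xi> that by simp
      then have "\<bar>R (\<xi>, y)\<bar> \<le> e / 8 * norm ((\<xi>, y) - (t, x))"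
        using \<open>\<bar>h\<bar> < d / 2\<close> by (intro R) linarith
      also have "\<dots> \<le> e / 8 * (2 * \<bar>h\<bar>)"
        using near \<open>e > 0\<close> by (intro mult_left_mono) auto
      finally show ?thesis
        by simp
    qed
    have "\<bar>R (\<xi>, x + h) - R (\<xi>, x)\<bar> \<le> e / 2 * \<bar>h\<bar>"
      using small[of "x + h"] small[of x] by linarith
    then have "\<bar>(R (\<xi>, x + h) - R (\<xi>, x)) / h\<bar> \<le> e / 2"
      using \<open>h \<noteq> 0\<close> by (simp add: divide_le_eq)
    moreover have "mixed_difference F t x h / h\<^sup>2 - D (0, 1) = (R (\<xi>, x + h) - R (\<xi>, x)) / h"
      using \<open>h \<noteq> 0\<close> unfolding mvt split by (simp add: power2_eq_square field_simps)
    ultimately show "norm (mixed_difference F t x h / h\<^sup>2 - D (0, 1)) < e"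
      using \<open>e > 0\<close> unfolding real_norm_def by linarith
  qed
qed

lemma open_contains_square:
  fixes a b :: real
  assumes "open U" "(a, b) \<in> U"
  obtains r where "r > 0" "\<And>s y. \<bar>s - a\<bar> < r \<Longrightarrow> \<bar>y - b\<bar> < r \<Longrightarrow> (s, y) \<in> U"
proof -
  obtain \<epsilon> where "\<epsilon> > 0" and ball: "ball (a, b) \<epsilon> \<subseteq> U"
    using assms open_contains_ball by blast
  show thesis
  proof (rule that[of "\<epsilon> / 2"])
    fix s y
    assume "\<bar>s - a\<bar> < \<epsilon> / 2" "\<bar>y - b\<bar> < \<epsilon> / 2"
    moreover have "dist (a, b) (s, y) \<le> \<bar>s - a\<bar> + \<bar>y - b\<bar>"
      using norm_Pair_le[of "a - s" "b - y"] by (simp add: dist_norm abs_minus_commute)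
    ultimately show "(s, y) \<in> U"
      using ball by auto
  qed (use \<open>\<epsilon> > 0\<close> in simp)
qed

lemma mixed_partials_commute:
  assumes U: "open U" and "(a, b) \<in> U"
    and G: "(\<lambda>z. G (fst z) (snd z)) differentiable_on U"
    and Gt: "(\<lambda>z. pt G (fst z) (snd z)) differentiable_on U"
    and Gx: "(\<lambda>z. px G (fst z) (snd z)) differentiable_on U"
  shows "px (pt G) a b = pt (px G) a b"
proof -
  obtain r where "r > 0" and near: "\<And>s y. \<bar>s - a\<bar> < r \<Longrightarrow> \<bar>y - b\<bar> < r \<Longrightarrow> (s, y) \<in> U"
    using open_contains_square[OF U \<open>(a, b) \<in> U\<close>] by blast
  have diff_at: "(\<lambda>z. H (fst z) (snd z)) differentiable (at (s, y))"
    if "(\<lambda>z. H (fst z) (snd z)) differentiable_on U" "\<bar>s - a\<bar> < r" "\<bar>y - b\<bar> < r" for H s y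
    using that near U differentiable_on_eq_differentiable_at by blast
  obtain Dt where Dt: "((\<lambda>z. pt G (fst z) (snd z)) has_derivative Dt) (at (a, b))"
    using diff_at[OF Gt, of a b] \<open>r > 0\<close> differentiable_def by auto
  obtain Dx where Dx: "((\<lambda>z. px G (fst z) (snd z)) has_derivative Dx) (at (a, b))"
    using diff_at[OF Gx, of a b] \<open>r > 0\<close> differentiable_def by auto
  have "((\<lambda>h. mixed_difference G a b h / h\<^sup>2) \<longlongrightarrow> Dt (0, 1)) (at 0)"
  proof (rule mixed_difference_quotient_tendsto[OF \<open>r > 0\<close> _ Dt])
    fix s y
    assume "\<bar>s - a\<bar> < r" "\<bar>y - b\<bar> < r"
    then show "((\<lambda>s. G s y) has_real_derivative pt G s y) (at s)"
      by (rule differentiable_partial_derivatives(1)[OF diff_at[OF G]])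
  qed
  moreover have "((\<lambda>h. mixed_difference G a b h / h\<^sup>2) \<longlongrightarrow> Dx (1, 0)) (at 0)"
  proof -
    have "((\<lambda>z. (snd z, fst z)) has_derivative (\<lambda>z. (snd z, fst z))) (at (b, a))"
      by (auto intro!: derivative_eq_intros)
    from has_derivative_compose[OF this, of "\<lambda>z. px G (fst z) (snd z)" Dx] Dx
    have Dx': "((\<lambda>z. px G (snd z) (fst z)) has_derivative (\<lambda>z. Dx (snd z, fst z))) (at (b, a))"
      by simp
    have "((\<lambda>h. mixed_difference (\<lambda>y s. G s y) b a h / h\<^sup>2) \<longlongrightarrow> Dx (1, 0)) (at 0)"
    proof (rule mixed_difference_quotient_tendsto[OF \<open>r > 0\<close> _ Dx', simplified])
      fix y s
      assume "\<bar>y - b\<bar> < r" "\<bar>s - a\<bar> < r"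
      then show "((\<lambda>y. G s y) has_real_derivative px G s y) (at y)"
        by (intro differentiable_partial_derivatives(2)[OF diff_at[OF G]])
    qed
    then show ?thesis
      by (simp only: mixed_difference_swap[of G b a])
  qed
  ultimately have "Dt (0, 1) = Dx (1, 0)"
    by (rule tendsto_unique[OF at_neq_bot])
  moreover have "px (pt G) a b = Dt (0, 1)"
    using has_derivative_partials(2)[OF Dt] by (simp add: px_def DERIV_imp_deriv)
  moreover have "pt (px G) a b = Dx (1, 0)"
    using has_derivative_partials(1)[OF Dx] by (simp add: pt_def DERIV_imp_deriv)
  ultimately show ?thesis
    by simp
qed

lemma smooth2_on_partial_derivatives:
  assumes "open U" "smooth2_on U u" "(t, x) \<in> U"
  shows "((\<lambda>y. dapp ds u t y) has_real_derivative dapp (False # ds) u t x) (at x)"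
    and "((\<lambda>s. dapp ds u s x) has_real_derivative dapp (True # ds) u t x) (at t)"
proof -
  have "(\<lambda>z. dapp ds u (fst z) (snd z)) differentiable (at (t, x))"
    using assms differentiable_on_eq_differentiable_at unfolding smooth2_on_def by blast
  from differentiable_partial_derivatives[OF this]
  show "((\<lambda>y. dapp ds u t y) has_real_derivative dapp (False # ds) u t x) (at x)"
    and "((\<lambda>s. dapp ds u s x) has_real_derivative dapp (True # ds) u t x) (at t)"
    by simp_all
qed

lemma smooth2_on_mixed_partials_commute:
  assumes "open U" "smooth2_on U u" "(t, x) \<in> U"
  shows "px (pt (dapp ds u)) t x = pt (px (dapp ds u)) t x"
proof -
  have "\<And>ds. (\<lambda>z. dapp ds u (fst z) (snd z)) differentiable_on U"
    using assms(2) unfolding smooth2_on_def by blast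
  from this[of ds] this[of "True # ds"] this[of "False # ds"]
  show ?thesis
    by (simp add: mixed_partials_commute[OF assms(1,3)])
qed

lemma smooth2_on_third_partials_commute:
  assumes U: "open U" and u: "smooth2_on U u" and tx: "(t, x) \<in> U"
  shows "pt (px (px u)) t x = px (px (pt u)) t x"
proof -
  have "pt (px (px u)) t x = px (pt (px u)) t x"
    using smooth2_on_mixed_partials_commute[OF assms, of "[False]"] by simp
  also have "\<dots> = px (px (pt u)) t x"
    unfolding px_def[of "pt (px u)"] px_def[of "px (pt u)"]
  proof (rule deriv_cong_ev[OF _ refl])
    have "open {y. (t, y) \<in> U}"
      using continuous_open_vimage[OF U, of "\<lambda>y. (t, y)"] by (simp add: vimage_def continuous_intros)
    then have "\<forall>\<^sub>F y in nhds x. (t, y) \<in> U"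
      using tx eventually_nhds_in_open by fastforce
    then show "\<forall>\<^sub>F y in nhds x. pt (px u) t y = px (pt u) t y"
      by (rule eventually_mono)
        (use smooth2_on_mixed_partials_commute[OF U u, of t _ "[]"] in simp)
  qed
  finally show ?thesis .
qed

lemma smooth1_continuous_on: "smooth1 f \<Longrightarrow> continuous_on UNIV f"
  unfolding smooth1_def by (metis differentiable_imp_continuous_on funpow_0)

lemma smooth1_differentiable: "smooth1 f \<Longrightarrow> f differentiable (at z)"
  unfolding smooth1_def by (metis UNIV_I differentiable_on_eq_differentiable_at funpow_0 open_UNIV)

lemma continuous_on_UNIV_antiderivative:
  fixes f :: "real \<Rightarrow> real"
  assumes "continuous_on UNIV f"
  obtains F where "\<And>z. (F has_real_derivative f z) (at z)"
  using einterval_antiderivative[of "-\<infinity>" "\<infinity>" f] assms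
  by (auto simp: has_real_derivative_iff_has_vector_derivative continuous_on_eq_continuous_at)

lemma log_ratio_has_derivative:
  fixes v w :: "real \<Rightarrow> real"
  assumes "(v has_real_derivative v') (at x)" "(w has_real_derivative w') (at x)"
    and "(v x)\<^sup>2 \<noteq> (w x)\<^sup>2"
  shows "((\<lambda>y. ln ((v y + w y)\<^sup>2) - ln ((v y - w y)\<^sup>2)) has_real_derivative
           4 * (v x * w' - w x * v') / ((v x)\<^sup>2 - (w x)\<^sup>2)) (at x)"
proof -
  have "(v x + w x) * (v x - w x) \<noteq> 0"
    using assms(3) by (simp add: power2_eq_square algebra_simps)
  then have "v x + w x \<noteq> 0" "v x - w x \<noteq> 0"
    by auto
  then have "(v x + w x) * (v x + w x) > 0" "(v x - w x) * (v x - w x) > 0"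
    by (metis not_real_square_gt_zero)+
  then have "((\<lambda>y. ln ((v y + w y)\<^sup>2) - ln ((v y - w y)\<^sup>2)) has_real_derivative
      2 * (v' + w') / (v x + w x) - 2 * (v' - w') / (v x - w x)) (at x)"
    by (auto intro!: derivative_eq_intros assms(1,2) simp: power2_eq_square)
  moreover have "2 * (v' + w') / (v x + w x) - 2 * (v' - w') / (v x - w x)
      = 4 * (v x * w' - w x * v') / ((v x)\<^sup>2 - (w x)\<^sup>2)"
    using \<open>v x + w x \<noteq> 0\<close> \<open>v x - w x \<noteq> 0\<close> \<open>(v x + w x) * (v x - w x) \<noteq> 0\<close>
    by (simp add: field_simps power2_eq_square)
  ultimately show ?thesis
    by (rule DERIV_cong)
qed

definition momentum_flux ::
    "(real \<Rightarrow> real) \<Rightarrow> (real \<Rightarrow> real \<Rightarrow> real) \<Rightarrow> real \<Rightarrow> real \<Rightarrow> real \<Rightarrow> real \<Rightarrow> real \<Rightarrow> real \<Rightarrow> real"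
  where "momentum_flux F1 g f0 x u ux m utx =
    g u ux * m - utx + F1 (u\<^sup>2 - ux\<^sup>2) / 2 + f0 * x - f0 / 4 * (ln ((u + ux)\<^sup>2) - ln ((u - ux)\<^sup>2))"

definition energy_flux ::
    "(real \<Rightarrow> real) \<Rightarrow> (real \<Rightarrow> real \<Rightarrow> real) \<Rightarrow> real \<Rightarrow> real \<Rightarrow> real \<Rightarrow> real \<Rightarrow> real \<Rightarrow> real \<Rightarrow> real"
  where "energy_flux H1 g h0 x u ux m utx =
    2 * u * (g u ux * m) - 2 * u * utx - H1 (u\<^sup>2 - ux\<^sup>2) - 2 * h0 * x
      + h0 / 2 * (ln ((u + ux)\<^sup>2) - ln ((u - ux)\<^sup>2))"

lemma momentum_flux_has_derivative:
  fixes v w m q :: "real \<Rightarrow> real"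
  assumes v: "(v has_real_derivative w x) (at x)" and w: "(w has_real_derivative w') (at x)"
    and m: "m x = v x - w'"
    and q: "(q has_real_derivative q') (at x)"
    and gm: "((\<lambda>y. g (v y) (w y) * m y) has_real_derivative G') (at x)"
    and F1: "\<And>z. (F1 has_real_derivative f1 z) (at z)"
    and nz: "(v x)\<^sup>2 \<noteq> (w x)\<^sup>2"
    and pde: "ut - q' + (w x * f1 ((v x)\<^sup>2 - (w x)\<^sup>2) + f0 * v x / ((v x)\<^sup>2 - (w x)\<^sup>2)) * m x + G' = 0"
  shows "((\<lambda>y. momentum_flux F1 g f0 y (v y) (w y) (m y) (q y)) has_real_derivative - ut) (at x)"
proof -
  let ?W = "(v x)\<^sup>2 - (w x)\<^sup>2"
  have "((\<lambda>y. (v y)\<^sup>2 - (w y)\<^sup>2) has_real_derivative 2 * v x * w x - 2 * w x * w') (at x)"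
    by (auto intro!: derivative_eq_intros v w)
  note F1W = DERIV_chain2[OF F1 this]
  have "((\<lambda>y. momentum_flux F1 g f0 y (v y) (w y) (m y) (q y)) has_real_derivative
      G' - q' + f1 ?W * (2 * v x * w x - 2 * w x * w') / 2 + f0 * 1
        - f0 / 4 * (4 * (v x * w' - w x * w x) / ?W)) (at x)"
    unfolding momentum_flux_def
    by (intro DERIV_diff DERIV_add DERIV_cdivide DERIV_cmult DERIV_ident gm q F1W
        log_ratio_has_derivative[OF v w nz])
  moreover have "G' - q' + f1 ?W * (2 * v x * w x - 2 * w x * w') / 2 + f0 * 1
        - f0 / 4 * (4 * (v x * w' - w x * w x) / ?W) = - ut"
    using pde nz unfolding m by (simp add: field_simps power2_eq_square)
  ultimately show ?thesis
    by (rule DERIV_cong)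
qed

lemma energy_flux_has_derivative:
  fixes v w m q :: "real \<Rightarrow> real"
  assumes v: "(v has_real_derivative w x) (at x)" and w: "(w has_real_derivative w') (at x)"
    and m: "m x = v x - w'"
    and q: "(q has_real_derivative q') (at x)"
    and gm: "((\<lambda>y. g (v y) (w y) * m y) has_real_derivative G') (at x)"
    and H1: "\<And>z. (H1 has_real_derivative h1 z) (at z)"
    and nz: "w x \<noteq> 0" "(v x)\<^sup>2 \<noteq> (w x)\<^sup>2"
    and g: "g (v x) (w x) = v x * f1 ((v x)\<^sup>2 - (w x)\<^sup>2) + h1 ((v x)\<^sup>2 - (w x)\<^sup>2)
              + (f0 * (v x)\<^sup>2 + h0 * v x) / (w x * ((v x)\<^sup>2 - (w x)\<^sup>2))"
    and pde: "ut - q' + (w x * f1 ((v x)\<^sup>2 - (w x)\<^sup>2) + f0 * v x / ((v x)\<^sup>2 - (w x)\<^sup>2)) * m x + G' = 0"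
  shows "((\<lambda>y. energy_flux H1 g h0 y (v y) (w y) (m y) (q y)) has_real_derivative
           - (2 * w x * q x + 2 * v x * ut)) (at x)"
proof -
  let ?W = "(v x)\<^sup>2 - (w x)\<^sup>2"
  have "((\<lambda>y. (v y)\<^sup>2 - (w y)\<^sup>2) has_real_derivative 2 * v x * w x - 2 * w x * w') (at x)"
    by (auto intro!: derivative_eq_intros v w)
  note H1W = DERIV_chain2[OF H1 this]
  have "((\<lambda>y. energy_flux H1 g h0 y (v y) (w y) (m y) (q y)) has_real_derivative
      2 * w x * (g (v x) (w x) * m x) + G' * (2 * v x) - (2 * w x * q x + q' * (2 * v x))
        - h1 ?W * (2 * v x * w x - 2 * w x * w') - 2 * h0 * 1
        + h0 / 2 * (4 * (v x * w' - w x * w x) / ?W)) (at x)"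
    unfolding energy_flux_def
    by (intro DERIV_diff DERIV_add DERIV_mult DERIV_cmult DERIV_ident gm q v H1W
        log_ratio_has_derivative[OF v w nz(2)])
  moreover have "2 * w x * (g (v x) (w x) * m x) + G' * (2 * v x) - (2 * w x * q x + q' * (2 * v x))
        - h1 ?W * (2 * v x * w x - 2 * w x * w') - 2 * h0 * 1
        + h0 / 2 * (4 * (v x * w' - w x * w x) / ?W) = - (2 * w x * q x + 2 * v x * ut)"
  proof -
    let ?f = "w x * f1 ?W + f0 * v x / ?W"
    have "?W \<noteq> 0"
      using nz(2) by simp
    have ut: "ut = q' - ?f * m x - G'"
      using pde by simp
    have "2 * w x * g (v x) (w x) - 2 * v x * ?f = 2 * w x * h1 ?W + 2 * h0 * v x / ?W"
    proof -
      obtain W where W: "?W = W" by blast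
      show ?thesis
        using \<open>?W \<noteq> 0\<close> nz(1) unfolding g W by (simp add: field_simps power2_eq_square)
    qed
    then have "2 * w x * (g (v x) (w x) * m x) - 2 * v x * ?f * m x
        = 2 * w x * h1 ?W * m x + 2 * h0 * v x * m x / ?W"
      by (simp add: algebra_simps add_divide_distrib)
    moreover have "h0 / 2 * (4 * (v x * w' - w x * w x) / ?W) - 2 * h0 = - 2 * h0 * v x * m x / ?W"
      using \<open>?W \<noteq> 0\<close> unfolding m by (simp add: field_simps power2_eq_square)
    moreover have "h1 ?W * (2 * v x * w x - 2 * w x * w') = 2 * w x * h1 ?W * m x"
      unfolding m by (simp add: algebra_simps)
    moreover have "2 * v x * ut = 2 * v x * q' - 2 * v x * ?f * m x - 2 * v x * G'"
      unfolding ut by (simp add: algebra_simps)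
    ultimately show ?thesis
      by (simp only: algebra_simps)
  qed
  ultimately show ?thesis
    by (rule DERIV_cong)
qed

lemma smooth2_on_pt_momentum_density:
  assumes "open U" "smooth2_on U u" "(t, x) \<in> U"
  shows "pt (\<lambda>t x. u t x - px (px u) t x) t x = pt u t x - px (px (pt u)) t x"
proof -
  have "((\<lambda>s. u s x - px (px u) s x) has_real_derivative pt u t x - pt (px (px u)) t x) (at t)"
    using smooth2_on_partial_derivatives(2)[OF assms, of "[]"]
      smooth2_on_partial_derivatives(2)[OF assms, of "[False, False]"]
    by (intro DERIV_diff) simp_all
  then have "pt (\<lambda>t x. u t x - px (px u) t x) t x = pt u t x - pt (px (px u)) t x"
    unfolding pt_def[of "\<lambda>t x. u t x - px (px u) t x"] by (rule DERIV_imp_deriv)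
  then show ?thesis
    using smooth2_on_third_partials_commute[OF assms] by simp
qed

lemma smooth2_on_pt_energy_density:
  assumes "open U" "smooth2_on U u" "(t, x) \<in> U"
  shows "pt (\<lambda>t x. (px u t x)\<^sup>2 + (u t x)\<^sup>2) t x = 2 * px u t x * px (pt u) t x + 2 * u t x * pt u t x"
proof -
  have "((\<lambda>s. (px u s x)\<^sup>2 + (u s x)\<^sup>2) has_real_derivative
      2 * px u t x * pt (px u) t x + 2 * u t x * pt u t x) (at t)"
    using smooth2_on_partial_derivatives(2)[OF assms, of "[]"]
      smooth2_on_partial_derivatives(2)[OF assms, of "[False]"]
    by (auto intro!: derivative_eq_intros)
  then have "pt (\<lambda>t x. (px u t x)\<^sup>2 + (u t x)\<^sup>2) t x
      = 2 * px u t x * pt (px u) t x + 2 * u t x * pt u t x"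
    unfolding pt_def[of "\<lambda>t x. (px u t x)\<^sup>2 + (u t x)\<^sup>2"] by (rule DERIV_imp_deriv)
  then show ?thesis
    using smooth2_on_mixed_partials_commute[OF assms, of "[]"] by simp
qed

lemma local_conservation_laws:
  fixes u :: "real \<Rightarrow> real \<Rightarrow> real" and f g :: "real \<Rightarrow> real \<Rightarrow> real"
  assumes U: "open U" and u: "smooth2_on U u" and tx: "(t, x) \<in> U"
    and f1: "smooth1 f1" and h1: "smooth1 h1"
    and F1: "\<And>z. (F1 has_real_derivative f1 z) (at z)"
    and H1: "\<And>z. (H1 has_real_derivative h1 z) (at z)"
    and f: "f = (\<lambda>u ux. ux * f1 (u\<^sup>2 - ux\<^sup>2) + f0 * u / (u\<^sup>2 - ux\<^sup>2))"
    and g: "g = (\<lambda>u ux. u * f1 (u\<^sup>2 - ux\<^sup>2) + h1 (u\<^sup>2 - ux\<^sup>2)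
                     + (f0 * u\<^sup>2 + h0 * u) / (ux * (u\<^sup>2 - ux\<^sup>2)))"
    and m: "m = (\<lambda>t x. u t x - px (px u) t x)"
    and nz: "px u t x \<noteq> 0" "(u t x)\<^sup>2 \<noteq> (px u t x)\<^sup>2"
    and pde: "pt m t x + f (u t x) (px u t x) * m t x + px (\<lambda>t x. g (u t x) (px u t x) * m t x) t x = 0"
  shows "((\<lambda>y. momentum_flux F1 g f0 y (u t y) (px u t y) (m t y) (px (pt u) t y))
            has_real_derivative - pt u t x) (at x)"
    and "((\<lambda>y. energy_flux H1 g h0 y (u t y) (px u t y) (m t y) (px (pt u) t y))
            has_real_derivative - pt (\<lambda>t x. (px u t x)\<^sup>2 + (u t x)\<^sup>2) t x) (at x)"
proof -
  note dx = smooth2_on_partial_derivatives(1)[OF U u tx]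
  have v: "(u t has_real_derivative px u t x) (at x)"
    using dx[of "[]"] by simp
  have w: "(px u t has_real_derivative px (px u) t x) (at x)"
    using dx[of "[False]"] by simp
  have q: "(px (pt u) t has_real_derivative px (px (pt u)) t x) (at x)"
    using dx[of "[False, True]"] by simp
  have slices: "u t differentiable (at x)" "px u t differentiable (at x)" "px (px u) t differentiable (at x)"
    using v w dx[of "[False, False]"] by (auto simp: real_differentiable_def)
  then have W: "(\<lambda>y. (u t y)\<^sup>2 - (px u t y)\<^sup>2) differentiable (at x)"
    by (intro derivative_intros)
  have "(\<lambda>y. g (u t y) (px u t y) * m t y) differentiable (at x)"
    using nz unfolding g m
    by (intro derivative_intros differentiable_compose[OF smooth1_differentiable[OF f1] W]
        differentiable_compose[OF smooth1_differentiable[OF h1] W] slices) auto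
  then obtain G' where gm: "((\<lambda>y. g (u t y) (px u t y) * m t y) has_real_derivative G') (at x)"
    using real_differentiable_def by blast
  have "pt u t x - px (px (pt u)) t x + f (u t x) (px u t x) * m t x + G' = 0"
    using pde smooth2_on_pt_momentum_density[OF U u tx] DERIV_imp_deriv[OF gm]
    unfolding m by (simp add: px_def)
  then have pde_x: "pt u t x - px (px (pt u)) t x
      + (px u t x * f1 ((u t x)\<^sup>2 - (px u t x)\<^sup>2) + f0 * u t x / ((u t x)\<^sup>2 - (px u t x)\<^sup>2))
        * m t x + G' = 0"
    unfolding f by simp
  have mx: "m t x = u t x - px (px u) t x"
    unfolding m ..
  show "((\<lambda>y. momentum_flux F1 g f0 y (u t y) (px u t y) (m t y) (px (pt u) t y))
      has_real_derivative - pt u t x) (at x)"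
    using momentum_flux_has_derivative[OF v w mx q gm F1 _ pde_x] nz by simp
  show "((\<lambda>y. energy_flux H1 g h0 y (u t y) (px u t y) (m t y) (px (pt u) t y))
      has_real_derivative - pt (\<lambda>t x. (px u t x)\<^sup>2 + (u t x)\<^sup>2) t x) (at x)"
    unfolding smooth2_on_pt_energy_density[OF U u tx]
    using energy_flux_has_derivative[where ?f1.0 = f1 and ?f0.0 = f0, OF v w mx q gm H1 _ _ _ pde_x] nz
    by (simp add: g)
qed

theorem corollary1:
  fixes f1 h1 :: "real \<Rightarrow> real" and f0 h0 :: real
    and f g :: "real \<Rightarrow> real \<Rightarrow> real"
  assumes "smooth1 f1" and "smooth1 h1"
    and "f = (\<lambda>u ux. ux * f1 (u\<^sup>2 - ux\<^sup>2) + f0 * u / (u\<^sup>2 - ux\<^sup>2))"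
    and "g = (\<lambda>u ux. u * f1 (u\<^sup>2 - ux\<^sup>2) + h1 (u\<^sup>2 - ux\<^sup>2)
                     + (f0 * u\<^sup>2 + h0 * u) / (ux * (u\<^sup>2 - ux\<^sup>2)))"
  shows "\<exists>\<Phi>1 \<Phi>2 :: real \<Rightarrow> real \<Rightarrow> real \<Rightarrow> real \<Rightarrow> real \<Rightarrow> real \<Rightarrow> real.
    \<forall>U u. open U \<and> smooth2_on U u
      \<and> (\<forall>(t, x) \<in> U. px u t x \<noteq> 0 \<and> (u t x)\<^sup>2 - (px u t x)\<^sup>2 \<noteq> 0)
      \<and> (let m = (\<lambda>t x. u t x - px (px u) t x) in
          \<forall>(t, x) \<in> U. pt m t x + f (u t x) (px u t x) * m t x
                       + px (\<lambda>t x. g (u t x) (px u t x) * m t x) t x = 0)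
    \<longrightarrow> (let m = (\<lambda>t x. u t x - px (px u) t x) in
         \<forall>(t, x) \<in> U.
           ((\<lambda>y. \<Phi>1 y (u t y) (px u t y) (m t y) (pt u t y) (px (pt u) t y))
              has_real_derivative (- pt u t x)) (at x)
         \<and> ((\<lambda>y. \<Phi>2 y (u t y) (px u t y) (m t y) (pt u t y) (px (pt u) t y))
              has_real_derivative (- pt (\<lambda>t x. (px u t x)\<^sup>2 + (u t x)\<^sup>2) t x)) (at x))"
proof -
  obtain F1 where F1: "\<And>z. (F1 has_real_derivative f1 z) (at z)"
    using continuous_on_UNIV_antiderivative[OF smooth1_continuous_on[OF assms(1)]] by blast
  obtain H1 where H1: "\<And>z. (H1 has_real_derivative h1 z) (at z)"
    using continuous_on_UNIV_antiderivative[OF smooth1_continuous_on[OF assms(2)]] by blast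
  note laws = local_conservation_laws[OF _ _ _ assms(1,2) F1 H1 assms(3,4) refl]
  show ?thesis
    by (rule exI[of _ "\<lambda>x u ux m ut utx. momentum_flux F1 g f0 x u ux m utx"],
        rule exI[of _ "\<lambda>x u ux m ut utx. energy_flux H1 g h0 x u ux m utx"])
      (auto simp: Let_def intro!: laws)
qed

end
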